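(* Let $\tau$ be a $\sigma$-maxitive measure on a $\sigma$-algebra $\mathcal{B}$ on a nonempty set $E$. The following conditions are equivalent: 1. $\tau$ is $\sigma$-principal; 2. $\tau$ satisfies the countable chain condition; 3. the quotient space $\mathcal{B}/\tau$ is $\sigma$-principal, i.e. every $\sigma$-ideal of the $\sigma$-complete lattice $\mathcal{B}/\tau$ is a principal ideal; 4. there is a $\sigma$-principal $\sigma$-additive measure $m$ on $\mathcal{B}$ such that, for all $B\in\mathcal{B}$, $m(B)=0$ if and only if $\tau(B)=0$.
   Context: A $\sigma$-maxitive measure on $\mathcal{B}$ is a map $\tau:\mathcal{B}\to[0,\infty]$ with $\tau(\emptyset)=0$ and $\tau(\bigcup_j B_j)=\sup_j\tau(B_j)$ for every countable family $(B_j)$ in $\mathcal{B}$. A set $N\subset E$ is $\tau$-negligible if $N\subset B$ for some $B\in\mathcal{B}$ with $\tau(B)=0$; analogously for $m$. A $\sigma$-ideal of $\mathcal{B}$ is a nonempty subfamily closed under countable unions and such that $A\subset B\in\mathcal{I}$ with $A\in\mathcal{B}$ implies $A\in\mathcal{I}$. A monotone set function $\mu$ on $\mathcal{B}$ is $\sigma$-principal if for every $\sigma$-ideal $\mathcal{I}$ of $\mathcal{B}$ there is $L\in\mathcal{I}$ such that $S\setminus L$ is $\mu$-negligible for all $S\in\mathcal{I}$. $\tau$ satisfies the countable chain condition if every family of pairwise disjoint, non-$\tau$-negligible elements of $\mathcal{B}$ is countable. Quotient space: on $\mathcal{B}$ put $A\sim B$ if $A\cup N=B\cup N$ for some $\tau$-negligible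 $N$. Write $B^\tau$ for the class of $B$ and $\mathcal{B}/\tau$ for the set of classes, ordered by $A^\tau\le B^\tau$ iff $A\subset B\cup N$ for some $\tau$-negligible $N$; this is a $\sigma$-complete lattice. A $\sigma$-ideal of $\mathcal{B}/\tau$ is a nonempty down-closed subset closed under countable suprema. It is principal if it equals $\{x: x\le L^\tau\}$ for some $L$. *)

theory Defs
  imports "HOL-Analysis.Analysis"
begin

definition sigma_maxitive :: "'a set set \<Rightarrow> ('a set \<Rightarrow> ennreal) \<Rightarrow> bool" where
  "sigma_maxitive B \<tau> \<longleftrightarrow> \<tau> {} = 0 \<and>
     (\<forall>Bs :: nat \<Rightarrow> 'a set. range Bs \<subseteq> B \<longrightarrow> \<tau> (\<Union>j. Bs j) = (SUP j. \<tau> (Bs j)))"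

definition negligible :: "'a set set \<Rightarrow> ('a set \<Rightarrow> ennreal) \<Rightarrow> 'a set \<Rightarrow> bool" where
  "negligible B \<mu> N \<longleftrightarrow> (\<exists>C\<in>B. N \<subseteq> C \<and> \<mu> C = 0)"

definition sigma_ideal :: "'a set set \<Rightarrow> 'a set set \<Rightarrow> bool" where
  "sigma_ideal B I \<longleftrightarrow> I \<subseteq> B \<and> I \<noteq> {} \<and>
     (\<forall>Ss :: nat \<Rightarrow> 'a set. range Ss \<subseteq> I \<longrightarrow> (\<Union>j. Ss j) \<in> I) \<and>
     (\<forall>A C. A \<in> B \<longrightarrow> C \<in> I \<longrightarrow> A \<subseteq> C \<longrightarrow> A \<in> I)"

definition sigma_principal :: "'a set set \<Rightarrow> ('a set \<Rightarrow> ennreal) \<Rightarrow> bool" where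
  "sigma_principal B \<mu> \<longleftrightarrow>
     (\<forall>I. sigma_ideal B I \<longrightarrow> (\<exists>L\<in>I. \<forall>S\<in>I. negligible B \<mu> (S - L)))"

definition countable_chain_condition :: "'a set set \<Rightarrow> ('a set \<Rightarrow> ennreal) \<Rightarrow> bool" where
  "countable_chain_condition B \<tau> \<longleftrightarrow>
     (\<forall>F. F \<subseteq> B \<longrightarrow> disjoint F \<longrightarrow> (\<forall>A\<in>F. \<not> negligible B \<tau> A) \<longrightarrow> countable F)"

definition tau_equiv :: "'a set set \<Rightarrow> ('a set \<Rightarrow> ennreal) \<Rightarrow> ('a set \<times> 'a set) set" where
  "tau_equiv B \<tau> = {(A, C). A \<in> B \<and> C \<in> B \<and> (\<exists>N. negligible B \<tau> N \<and> A \<union> N = C \<union> N)}"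

definition quotient_space :: "'a set set \<Rightarrow> ('a set \<Rightarrow> ennreal) \<Rightarrow> 'a set set set" where
  "quotient_space B \<tau> = B // tau_equiv B \<tau>"

definition qclass :: "'a set set \<Rightarrow> ('a set \<Rightarrow> ennreal) \<Rightarrow> 'a set \<Rightarrow> 'a set set" where
  "qclass B \<tau> A = tau_equiv B \<tau> `` {A}"

definition qle :: "'a set set \<Rightarrow> ('a set \<Rightarrow> ennreal) \<Rightarrow> 'a set set \<Rightarrow> 'a set set \<Rightarrow> bool" where
  "qle B \<tau> x y \<longleftrightarrow> (\<exists>A\<in>x. \<exists>C\<in>y. \<exists>N. negligible B \<tau> N \<and> A \<subseteq> C \<union> N)"

definition q_is_lub :: "'a set set \<Rightarrow> ('a set \<Rightarrow> ennreal) \<Rightarrow> 'a set set set \<Rightarrow> 'a set set \<Rightarrow> bool" where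
  "q_is_lub B \<tau> X s \<longleftrightarrow> s \<in> quotient_space B \<tau> \<and> (\<forall>x\<in>X. qle B \<tau> x s) \<and>
     (\<forall>u\<in>quotient_space B \<tau>. (\<forall>x\<in>X. qle B \<tau> x u) \<longrightarrow> qle B \<tau> s u)"

definition q_sigma_ideal :: "'a set set \<Rightarrow> ('a set \<Rightarrow> ennreal) \<Rightarrow> 'a set set set \<Rightarrow> bool" where
  "q_sigma_ideal B \<tau> J \<longleftrightarrow> J \<subseteq> quotient_space B \<tau> \<and> J \<noteq> {} \<and>
     (\<forall>x y. x \<in> quotient_space B \<tau> \<longrightarrow> y \<in> J \<longrightarrow> qle B \<tau> x y \<longrightarrow> x \<in> J) \<and>
     (\<forall>xs :: nat \<Rightarrow> 'a set set. \<forall>s. range xs \<subseteq> J \<longrightarrow> q_is_lub B \<tau> (range xs) s \<longrightarrow> s \<in> J)"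

definition quotient_sigma_principal :: "'a set set \<Rightarrow> ('a set \<Rightarrow> ennreal) \<Rightarrow> bool" where
  "quotient_sigma_principal B \<tau> \<longleftrightarrow>
     (\<forall>J. q_sigma_ideal B \<tau> J \<longrightarrow>
        (\<exists>L\<in>B. J = {x \<in> quotient_space B \<tau>. qle B \<tau> x (qclass B \<tau> L)}))"

end

theory Submission
  imports Defs
begin

text \<open>
  The countable chain condition makes every \<sigma>-ideal principal: a maximal disjoint family of
  non-negligible members of the ideal is countable, so its union lies in the ideal, and by
  maximality every member of the ideal is contained in that union up to a negligible set.
  Conversely, the sets covered by countably many members of a disjoint family form a
  \<sigma>-ideal, whose principal element can only be covered by countably many of them.
  Since by maxitivity the negligible sets form a \<sigma>-ideal, "\<open>A \<subseteq> C\<close> up to a negligible set",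
  i.e. negligibility of \<open>A - C\<close>, is exactly the order of \<open>\<B>/\<tau>\<close>, with countable unions as
  suprema; so \<sigma>-ideals of \<open>\<B>\<close> and of \<open>\<B>/\<tau>\<close> correspond and principality transfers.
  Finally, \<sigma>-principality depends on \<open>\<tau>\<close> only through its null sets, and the measure that
  is \<open>0\<close> on \<open>\<tau>\<close>-null sets and \<open>\<infinity>\<close> elsewhere is \<sigma>-additive because \<open>\<tau>\<close> is \<sigma>-maxitive.
\<close>

lemma negligible_if_subset: "negligible B \<mu> N \<Longrightarrow> M \<subseteq> N \<Longrightarrow> negligible B \<mu> M"
  unfolding negligible_def by blast

lemma negligible_cong_null_sets:
  assumes "\<forall>A\<in>B. m A = 0 \<longleftrightarrow> \<tau> A = 0"
  shows "negligible B m = negligible B \<tau>"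
  using assms unfolding negligible_def by (intro ext) blast

lemma sigma_principal_cong_null_sets:
  assumes "\<forall>A\<in>B. m A = 0 \<longleftrightarrow> \<tau> A = 0"
  shows "sigma_principal B m \<longleftrightarrow> sigma_principal B \<tau>"
  unfolding sigma_principal_def negligible_cong_null_sets[OF assms] ..

lemma quotient_space_iff: "x \<in> quotient_space B \<tau> \<longleftrightarrow> (\<exists>A\<in>B. x = qclass B \<tau> A)"
  unfolding quotient_space_def qclass_def quotient_def by blast

lemma qclass_in_quotient_space: "A \<in> B \<Longrightarrow> qclass B \<tau> A \<in> quotient_space B \<tau>"
  unfolding quotient_space_iff by blast

lemma q_sigma_idealD:
  assumes "q_sigma_ideal B \<tau> J"
  shows "J \<subseteq> quotient_space B \<tau>" and "J \<noteq> {}"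
    and "\<And>x y. x \<in> quotient_space B \<tau> \<Longrightarrow> y \<in> J \<Longrightarrow> qle B \<tau> x y \<Longrightarrow> x \<in> J"
    and "\<And>(xs :: nat \<Rightarrow> 'a set set) s. range xs \<subseteq> J \<Longrightarrow> q_is_lub B \<tau> (range xs) s \<Longrightarrow> s \<in> J"
  using assms unfolding q_sigma_ideal_def by simp_all

lemma disjoint_Union_chain:
  assumes "chain_subset C" and "\<And>F. F \<in> C \<Longrightarrow> disjoint F"
  shows "disjoint (\<Union>C)"
proof (rule pairwiseI)
  fix X Y assume "X \<in> \<Union>C" "Y \<in> \<Union>C" "X \<noteq> Y"
  then obtain F1 F2 where "F1 \<in> C" "X \<in> F1" "F2 \<in> C" "Y \<in> F2" by blast
  moreover have "F1 \<subseteq> F2 \<or> F2 \<subseteq> F1"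
    using assms(1) \<open>F1 \<in> C\<close> \<open>F2 \<in> C\<close> unfolding chain_subset_def by blast
  ultimately obtain F where "F \<in> C" "X \<in> F" "Y \<in> F" by blast
  then show "disjnt X Y" using assms(2) \<open>X \<noteq> Y\<close> by (auto dest: pairwiseD)
qed

context sigma_algebra
begin

lemma sigma_ideal_empty:
  assumes "sigma_ideal M I"
  shows "{} \<in> I"
proof -
  obtain C where "C \<in> I" using assms unfolding sigma_ideal_def by auto
  then show ?thesis using assms unfolding sigma_ideal_def by blast
qed

lemma sigma_ideal_Union:
  assumes I: "sigma_ideal M I" and "countable F" "F \<subseteq> I"
  shows "\<Union>F \<in> I"
proof (cases "F = {}")
  case True
  then show ?thesis using sigma_ideal_empty[OF I] by simp
next
  case False
  then have "range (from_nat_into F) = F" using \<open>countable F\<close> by simp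
  then show ?thesis using I \<open>F \<subseteq> I\<close> unfolding sigma_ideal_def by metis
qed

lemma sigma_ideal_countably_covered:
  "sigma_ideal M {A\<in>M. \<exists>G\<subseteq>F. countable G \<and> A \<subseteq> \<Union>G}" (is "sigma_ideal M ?I")
  unfolding sigma_ideal_def
proof (intro conjI allI impI)
  show "?I \<subseteq> M" "?I \<noteq> {}" by (auto intro!: exI[of _ "{}"])
next
  fix S :: "nat \<Rightarrow> 'a set" assume "range S \<subseteq> ?I"
  then have "\<forall>j. \<exists>G. G \<subseteq> F \<and> countable G \<and> S j \<subseteq> \<Union>G" by blast
  then obtain G where G: "\<And>j. G j \<subseteq> F \<and> countable (G j) \<and> S j \<subseteq> \<Union>(G j)"
    by metis
  have "(\<Union>j. S j) \<subseteq> \<Union>(\<Union>j. G j)" using G by (fastforce simp: subset_eq)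
  moreover have "(\<Union>j. G j) \<subseteq> F" "countable (\<Union>j. G j)" using G by auto
  moreover have "(\<Union>j. S j) \<in> M" using \<open>range S \<subseteq> ?I\<close> by (intro countable_nat_UN) auto
  ultimately show "(\<Union>j. S j) \<in> ?I" by blast
next
  fix A C assume "A \<in> M" "C \<in> ?I" "A \<subseteq> C"
  then show "A \<in> ?I" by blast
qed

lemma countable_chain_condition_if_sigma_principal:
  assumes "sigma_principal M \<mu>"
  shows "countable_chain_condition M \<mu>"
  unfolding countable_chain_condition_def
proof (intro allI impI)
  fix F assume "F \<subseteq> M" and disj: "disjoint F" and non_null: "\<forall>A\<in>F. \<not> negligible M \<mu> A"
  let ?I = "{A\<in>M. \<exists>G\<subseteq>F. countable G \<and> A \<subseteq> \<Union>G}"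
  obtain L where "L \<in> ?I" and L: "\<forall>S\<in>?I. negligible M \<mu> (S - L)"
    using assms[unfolded sigma_principal_def, rule_format, OF sigma_ideal_countably_covered[of F]]
    by blast
  then obtain G where G: "G \<subseteq> F" "countable G" "L \<subseteq> \<Union>G" by blast
  have "F \<subseteq> G"
  proof
    fix S assume "S \<in> F"
    then have "S \<in> ?I" using \<open>F \<subseteq> M\<close> by (intro CollectI conjI exI[of _ "{S}"]) auto
    show "S \<in> G"
    proof (rule ccontr)
      assume "S \<notin> G"
      then have "S \<inter> \<Union>G = {}"
        using disj \<open>S \<in> F\<close> G(1) by (fastforce simp: disjnt_def dest: pairwiseD)
      then have "S - L = S" using G(3) by blast
      moreover have "negligible M \<mu> (S - L)" using L \<open>S \<in> ?I\<close> by blast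
      ultimately show False using non_null \<open>S \<in> F\<close> by simp
    qed
  qed
  then show "countable F" using G(2) countable_subset by blast
qed

lemma sigma_principal_if_countable_chain_condition:
  assumes "\<mu> {} = 0" and ccc: "countable_chain_condition M \<mu>"
  shows "sigma_principal M \<mu>"
  unfolding sigma_principal_def
proof (intro allI impI)
  fix I assume I: "sigma_ideal M I"
  then have "I \<subseteq> M" and I_down: "\<And>A C. A \<in> M \<Longrightarrow> C \<in> I \<Longrightarrow> A \<subseteq> C \<Longrightarrow> A \<in> I"
    unfolding sigma_ideal_def by blast+
  define \<A> where "\<A> = {F. F \<subseteq> I \<and> disjoint F \<and> (\<forall>A\<in>F. \<not> negligible M \<mu> A)}"
  have "\<forall>C\<in>chains \<A>. \<Union>C \<in> \<A>"
  proof
    fix C assume "C \<in> chains \<A>"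
    then have "C \<subseteq> \<A>" "chain_subset C" unfolding chains_def by auto
    then have "disjoint (\<Union>C)" by (intro disjoint_Union_chain) (auto simp: \<A>_def)
    then show "\<Union>C \<in> \<A>" using \<open>C \<subseteq> \<A>\<close> unfolding \<A>_def by blast
  qed
  from Zorn_Lemma[OF this] obtain F where "F \<in> \<A>" and F_max: "\<forall>X\<in>\<A>. F \<subseteq> X \<longrightarrow> X = F"
    by blast
  then have "F \<subseteq> I" and disj: "disjoint F" and non_null: "\<forall>A\<in>F. \<not> negligible M \<mu> A"
    unfolding \<A>_def by auto
  then have "countable F"
    using ccc \<open>I \<subseteq> M\<close> unfolding countable_chain_condition_def by blast
  then have "\<Union>F \<in> I" using sigma_ideal_Union[OF I] \<open>F \<subseteq> I\<close> by blast
  moreover have "negligible M \<mu> (S - \<Union>F)" if "S \<in> I" for S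
  proof (rule ccontr)
    assume rest: "\<not> negligible M \<mu> (S - \<Union>F)"
    have "S - \<Union>F \<in> M" using \<open>S \<in> I\<close> \<open>\<Union>F \<in> I\<close> \<open>I \<subseteq> M\<close> by (intro Diff) auto
    then have "S - \<Union>F \<in> I" using I_down \<open>S \<in> I\<close> by blast
    moreover have "disjoint (insert (S - \<Union>F) F)"
      using disj by (auto simp: pairwise_insert disjnt_def)
    ultimately have "insert (S - \<Union>F) F \<in> \<A>"
      using \<open>F \<subseteq> I\<close> non_null rest unfolding \<A>_def by blast
    then have "S - \<Union>F \<in> F" using F_max by blast
    then have "S - \<Union>F = {}" by blast
    then show False using rest \<open>\<mu> {} = 0\<close> unfolding negligible_def by auto
  qed
  ultimately show "\<exists>L\<in>I. \<forall>S\<in>I. negligible M \<mu> (S - L)" by blast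
qed

end

locale sigma_maxitive_space = sigma_algebra E B for E :: "'a set" and B +
  fixes \<tau> :: "'a set \<Rightarrow> ennreal"
  assumes sigma_maxitive: "sigma_maxitive B \<tau>"
begin

lemma tau_empty: "\<tau> {} = 0"
  using sigma_maxitive unfolding sigma_maxitive_def by simp

lemma negligible_empty [simp]: "negligible B \<tau> {}"
  using tau_empty unfolding negligible_def by blast

lemma negligible_UN:
  assumes "\<And>j::nat. negligible B \<tau> (N j)"
  shows "negligible B \<tau> (\<Union>j. N j)"
proof -
  obtain C where C: "\<And>j. C j \<in> B \<and> N j \<subseteq> C j \<and> \<tau> (C j) = 0"
    using assms unfolding negligible_def by metis
  then have "\<tau> (\<Union>j. C j) = 0"
    using sigma_maxitive unfolding sigma_maxitive_def by (simp add: image_subset_iff)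
  moreover have "(\<Union>j. C j) \<in> B" using C by (intro countable_nat_UN) auto
  ultimately show ?thesis unfolding negligible_def using C by blast
qed

lemma negligible_Un:
  assumes "negligible B \<tau> N1" "negligible B \<tau> N2"
  shows "negligible B \<tau> (N1 \<union> N2)"
proof -
  have "negligible B \<tau> (\<Union>j::nat. if j = 0 then N1 else N2)"
    using assms by (intro negligible_UN) simp
  moreover have "(\<Union>j::nat. if j = 0 then N1 else N2) = N1 \<union> N2"
    by (auto split: if_splits)
  ultimately show ?thesis by simp
qed

lemma negligible_Diff_if_subset: "A \<subseteq> C \<Longrightarrow> negligible B \<tau> (A - C)"
  by (metis Diff_eq_empty_iff negligible_empty)

lemma negligible_Diff_trans:
  assumes "negligible B \<tau> (A - C)" "negligible B \<tau> (C - D)"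
  shows "negligible B \<tau> (A - D)"
  by (rule negligible_if_subset[OF negligible_Un[OF assms]]) blast

lemma tau_equiv_iff:
  "(A, C) \<in> tau_equiv B \<tau> \<longleftrightarrow>
     A \<in> B \<and> C \<in> B \<and> negligible B \<tau> (A - C) \<and> negligible B \<tau> (C - A)"
proof
  assume "(A, C) \<in> tau_equiv B \<tau>"
  then obtain N where "A \<in> B" "C \<in> B" "negligible B \<tau> N" "A \<union> N = C \<union> N"
    unfolding tau_equiv_def by blast
  then show "A \<in> B \<and> C \<in> B \<and> negligible B \<tau> (A - C) \<and> negligible B \<tau> (C - A)"
    by (metis Diff_subset_conv Un_upper1 negligible_if_subset sup_commute)
next
  assume *: "A \<in> B \<and> C \<in> B \<and> negligible B \<tau> (A - C) \<and> negligible B \<tau> (C - A)"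
  have "negligible B \<tau> ((A - C) \<union> (C - A))"
    using * by (intro negligible_Un) simp_all
  moreover have "A \<union> ((A - C) \<union> (C - A)) = C \<union> ((A - C) \<union> (C - A))" by blast
  ultimately show "(A, C) \<in> tau_equiv B \<tau>" using * unfolding tau_equiv_def by blast
qed

lemma qclass_self: "A \<in> B \<Longrightarrow> A \<in> qclass B \<tau> A"
  unfolding qclass_def by (simp add: tau_equiv_iff)

lemma qle_qclass_iff:
  assumes "A \<in> B" "C \<in> B"
  shows "qle B \<tau> (qclass B \<tau> A) (qclass B \<tau> C) \<longleftrightarrow> negligible B \<tau> (A - C)"
proof
  assume "qle B \<tau> (qclass B \<tau> A) (qclass B \<tau> C)"
  then obtain A' C' N where "(A, A') \<in> tau_equiv B \<tau>" "(C, C') \<in> tau_equiv B \<tau>"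
      and N: "negligible B \<tau> N" "A' \<subseteq> C' \<union> N"
    unfolding qle_def qclass_def by blast
  then have "negligible B \<tau> (A - A')" "negligible B \<tau> (C' - C)"
    by (simp_all add: tau_equiv_iff)
  moreover have "negligible B \<tau> (A' - C')"
    using N(2) by (intro negligible_if_subset[OF N(1)]) blast
  ultimately show "negligible B \<tau> (A - C)"
    using negligible_Diff_trans by blast
next
  assume "negligible B \<tau> (A - C)"
  then show "qle B \<tau> (qclass B \<tau> A) (qclass B \<tau> C)"
    unfolding qle_def using qclass_self assms by blast
qed

lemma qle_qclass_if_subset:
  "A \<in> B \<Longrightarrow> C \<in> B \<Longrightarrow> A \<subseteq> C \<Longrightarrow> qle B \<tau> (qclass B \<tau> A) (qclass B \<tau> C)"
  by (simp add: qle_qclass_iff negligible_Diff_if_subset)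

lemma qle_trans:
  assumes "x \<in> quotient_space B \<tau>" "y \<in> quotient_space B \<tau>" "z \<in> quotient_space B \<tau>"
    and "qle B \<tau> x y" "qle B \<tau> y z"
  shows "qle B \<tau> x z"
proof -
  obtain X Y Z where XYZ: "X \<in> B" "Y \<in> B" "Z \<in> B"
    and xyz: "x = qclass B \<tau> X" "y = qclass B \<tau> Y" "z = qclass B \<tau> Z"
    using assms(1-3) unfolding quotient_space_iff by blast
  then have "negligible B \<tau> (X - Y)" "negligible B \<tau> (Y - Z)"
    using assms(4,5) qle_qclass_iff by simp_all
  then have "negligible B \<tau> (X - Z)" by (rule negligible_Diff_trans)
  then show ?thesis using xyz qle_qclass_iff[OF \<open>X \<in> B\<close> \<open>Z \<in> B\<close>] by simp
qed

lemma q_is_lub_qclass_UN: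
  fixes S :: "nat \<Rightarrow> 'a set"
  assumes "range S \<subseteq> B"
  shows "q_is_lub B \<tau> (range (\<lambda>j. qclass B \<tau> (S j))) (qclass B \<tau> (\<Union>j. S j))"
  unfolding q_is_lub_def
proof (intro conjI ballI impI)
  have S: "\<And>j. S j \<in> B" using assms by auto
  have "(\<Union>j. S j) \<in> B" using assms by (rule countable_nat_UN)
  then show "qclass B \<tau> (\<Union>j. S j) \<in> quotient_space B \<tau>"
    by (rule qclass_in_quotient_space)
  show "qle B \<tau> x (qclass B \<tau> (\<Union>j. S j))" if x: "x \<in> range (\<lambda>j. qclass B \<tau> (S j))" for x
  proof -
    obtain j where "x = qclass B \<tau> (S j)" using x by blast
    then show ?thesis using qle_qclass_if_subset[OF S \<open>(\<Union>j. S j) \<in> B\<close>] by blast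
  qed
  show "qle B \<tau> (qclass B \<tau> (\<Union>j. S j)) u"
    if u: "u \<in> quotient_space B \<tau>" and ub: "\<forall>x\<in>range (\<lambda>j. qclass B \<tau> (S j)). qle B \<tau> x u"
    for u
  proof -
    obtain U where "U \<in> B" and u: "u = qclass B \<tau> U"
      using u unfolding quotient_space_iff by blast
    then have "negligible B \<tau> (S j - U)" for j
      using ub qle_qclass_iff[OF S] by blast
    then have "negligible B \<tau> (\<Union>j. S j - U)" by (rule negligible_UN)
    then show ?thesis
      using qle_qclass_iff[OF \<open>(\<Union>j. S j) \<in> B\<close> \<open>U \<in> B\<close>] u by simp
  qed
qed

lemma sigma_ideal_qclass_preimage:
  assumes J: "q_sigma_ideal B \<tau> J"
  shows "sigma_ideal B {A\<in>B. qclass B \<tau> A \<in> J}"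
  unfolding sigma_ideal_def
proof (intro conjI allI impI)
  have "J \<noteq> {}" by (rule q_sigma_idealD(2)[OF J])
  then obtain x where "x \<in> J" by blast
  then have "x \<in> quotient_space B \<tau>" using q_sigma_idealD(1)[OF J] by blast
  then obtain A where "A \<in> B" "x = qclass B \<tau> A"
    unfolding quotient_space_iff by blast
  then show "{A\<in>B. qclass B \<tau> A \<in> J} \<noteq> {}" using \<open>x \<in> J\<close> by blast
next
  fix A C assume "A \<in> B" and C: "C \<in> {A\<in>B. qclass B \<tau> A \<in> J}" and "A \<subseteq> C"
  then have "qle B \<tau> (qclass B \<tau> A) (qclass B \<tau> C)" by (simp add: qle_qclass_if_subset)
  then have "qclass B \<tau> A \<in> J"
    using q_sigma_idealD(3)[OF J qclass_in_quotient_space[OF \<open>A \<in> B\<close>]] C by blast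
  then show "A \<in> {A\<in>B. qclass B \<tau> A \<in> J}" using \<open>A \<in> B\<close> by blast
next
  fix S :: "nat \<Rightarrow> 'a set" assume "range S \<subseteq> {A\<in>B. qclass B \<tau> A \<in> J}"
  then have "range S \<subseteq> B" "range (\<lambda>j. qclass B \<tau> (S j)) \<subseteq> J" by auto
  then show "(\<Union>j. S j) \<in> {A\<in>B. qclass B \<tau> A \<in> J}"
    using q_sigma_idealD(4)[OF J] q_is_lub_qclass_UN countable_nat_UN by blast
qed auto

lemma q_sigma_ideal_generated:
  assumes I: "sigma_ideal B I"
  shows "q_sigma_ideal B \<tau> {x \<in> quotient_space B \<tau>. \<exists>A\<in>I. qle B \<tau> x (qclass B \<tau> A)}"
    (is "q_sigma_ideal B \<tau> ?J")
proof -
  have "I \<subseteq> B" using I unfolding sigma_ideal_def by blast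
  then have qclass_I: "qclass B \<tau> A \<in> quotient_space B \<tau>" if "A \<in> I" for A
    using that qclass_in_quotient_space by blast
  show ?thesis
    unfolding q_sigma_ideal_def
  proof (intro conjI allI impI)
    have "{} \<in> I" using I by (rule sigma_ideal_empty)
    then have "qclass B \<tau> {} \<in> ?J" using qclass_I qle_qclass_if_subset by blast
    then show "?J \<noteq> {}" by blast
  next
    fix x y assume x: "x \<in> quotient_space B \<tau>" and y: "y \<in> ?J" and "qle B \<tau> x y"
    then obtain A where "A \<in> I" and yA: "qle B \<tau> y (qclass B \<tau> A)" by blast
    then have "qle B \<tau> x (qclass B \<tau> A)"
      using qle_trans[OF x _ qclass_I \<open>qle B \<tau> x y\<close> yA] y by blast
    then show "x \<in> ?J" using x \<open>A \<in> I\<close> by blast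
  next
    fix xs :: "nat \<Rightarrow> 'a set set" and s
    assume xs: "range xs \<subseteq> ?J" and lub: "q_is_lub B \<tau> (range xs) s"
    then have "\<forall>j. \<exists>A. A \<in> I \<and> qle B \<tau> (xs j) (qclass B \<tau> A)" by blast
    then obtain A where A: "\<And>j. A j \<in> I" "\<And>j. qle B \<tau> (xs j) (qclass B \<tau> (A j))"
      by metis
    have "(\<Union>j. A j) \<in> I" using I A(1) unfolding sigma_ideal_def by blast
    have "qle B \<tau> (qclass B \<tau> (A j)) (qclass B \<tau> (\<Union>j. A j))" for j
      using A(1) \<open>(\<Union>j. A j) \<in> I\<close> \<open>I \<subseteq> B\<close> by (intro qle_qclass_if_subset) auto
    moreover have "xs j \<in> quotient_space B \<tau>" for j using xs by blast
    ultimately have "qle B \<tau> (xs j) (qclass B \<tau> (\<Union>j. A j))" for j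
      using qle_trans[OF _ qclass_I[OF A(1)] qclass_I[OF \<open>(\<Union>j. A j) \<in> I\<close>] A(2)] by blast
    then have "qle B \<tau> s (qclass B \<tau> (\<Union>j. A j))"
      using lub qclass_I[OF \<open>(\<Union>j. A j) \<in> I\<close>] unfolding q_is_lub_def by blast
    moreover have "s \<in> quotient_space B \<tau>" using lub unfolding q_is_lub_def by blast
    ultimately show "s \<in> ?J" using \<open>(\<Union>j. A j) \<in> I\<close> by blast
  qed blast
qed

lemma qclass_mem_generated_iff:
  assumes "I \<subseteq> B" "X \<in> B"
  shows "qclass B \<tau> X \<in> {x \<in> quotient_space B \<tau>. \<exists>A\<in>I. qle B \<tau> x (qclass B \<tau> A)}
     \<longleftrightarrow> (\<exists>A\<in>I. negligible B \<tau> (X - A))"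
proof -
  have "qle B \<tau> (qclass B \<tau> X) (qclass B \<tau> A) \<longleftrightarrow> negligible B \<tau> (X - A)" if "A \<in> I" for A
    using assms that by (intro qle_qclass_iff) auto
  then show ?thesis using qclass_in_quotient_space[OF \<open>X \<in> B\<close>] by auto
qed

lemma quotient_sigma_principal_if_sigma_principal:
  assumes "sigma_principal B \<tau>"
  shows "quotient_sigma_principal B \<tau>"
  unfolding quotient_sigma_principal_def
proof (intro allI impI)
  fix J assume J: "q_sigma_ideal B \<tau> J"
  note J_sub = q_sigma_idealD(1)[OF J] and J_down = q_sigma_idealD(3)[OF J]
  obtain L where "L \<in> {A\<in>B. qclass B \<tau> A \<in> J}"
      and L: "\<forall>S\<in>{A\<in>B. qclass B \<tau> A \<in> J}. negligible B \<tau> (S - L)"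
    using assms[unfolded sigma_principal_def, rule_format, OF sigma_ideal_qclass_preimage[OF J]]
    by blast
  then have "L \<in> B" "qclass B \<tau> L \<in> J" by auto
  have "x \<in> J \<longleftrightarrow> x \<in> quotient_space B \<tau> \<and> qle B \<tau> x (qclass B \<tau> L)" for x
  proof
    assume "x \<in> J"
    then have "x \<in> quotient_space B \<tau>" using J_sub by blast
    then obtain S where "S \<in> B" "x = qclass B \<tau> S"
      unfolding quotient_space_iff by blast
    moreover from this have "negligible B \<tau> (S - L)" using L \<open>x \<in> J\<close> by blast
    ultimately show "x \<in> quotient_space B \<tau> \<and> qle B \<tau> x (qclass B \<tau> L)"
      using qle_qclass_iff[OF \<open>S \<in> B\<close> \<open>L \<in> B\<close>] qclass_in_quotient_space by simp
  qed (use J_down \<open>qclass B \<tau> L \<in> J\<close> in blast)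
  then show "\<exists>L\<in>B. J = {x \<in> quotient_space B \<tau>. qle B \<tau> x (qclass B \<tau> L)}"
    using \<open>L \<in> B\<close> by blast
qed

lemma sigma_principal_if_quotient_sigma_principal:
  assumes "quotient_sigma_principal B \<tau>"
  shows "sigma_principal B \<tau>"
  unfolding sigma_principal_def
proof (intro allI impI)
  fix I assume I: "sigma_ideal B I"
  then have "I \<subseteq> B" unfolding sigma_ideal_def by blast
  note J_iff = qclass_mem_generated_iff[OF \<open>I \<subseteq> B\<close>]
  let ?J = "{x \<in> quotient_space B \<tau>. \<exists>A\<in>I. qle B \<tau> x (qclass B \<tau> A)}"
  obtain L where "L \<in> B" and J_eq: "?J = {x \<in> quotient_space B \<tau>. qle B \<tau> x (qclass B \<tau> L)}"
    using assms[unfolded quotient_sigma_principal_def, rule_format, OF q_sigma_ideal_generated[OF I]]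
    by blast
  have "qclass B \<tau> L \<in> ?J"
    unfolding J_eq using \<open>L \<in> B\<close> qle_qclass_if_subset qclass_in_quotient_space by simp
  then obtain A where "A \<in> I" and LA: "negligible B \<tau> (L - A)"
    using J_iff \<open>L \<in> B\<close> by blast
  have "negligible B \<tau> (S - A)" if "S \<in> I" for S
  proof -
    have "S \<in> B" using that \<open>I \<subseteq> B\<close> by blast
    moreover have "\<exists>A\<in>I. negligible B \<tau> (S - A)" using that by (intro bexI[of _ S]) simp_all
    ultimately have "qclass B \<tau> S \<in> ?J" by (simp only: J_iff)
    then have "negligible B \<tau> (S - L)"
      unfolding J_eq by (simp add: qle_qclass_iff[OF \<open>S \<in> B\<close> \<open>L \<in> B\<close>])
    then show ?thesis using LA negligible_Diff_trans by blast
  qed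
  then show "\<exists>L\<in>I. \<forall>S\<in>I. negligible B \<tau> (S - L)" using \<open>A \<in> I\<close> by blast
qed

lemma measure_space_null_sets_of_tau:
  "measure_space E B (\<lambda>A. if \<tau> A = 0 then 0 else \<infinity>)" (is "measure_space E B ?m")
proof -
  have "(\<Sum>i. ?m (A i)) = ?m (\<Union>i. A i)" if "range A \<subseteq> B" for A :: "nat \<Rightarrow> 'a set"
  proof (cases "\<forall>i. \<tau> (A i) = 0")
    case True
    then show ?thesis using sigma_maxitive that unfolding sigma_maxitive_def by simp
  next
    case False
    then obtain j where j: "\<tau> (A j) \<noteq> 0" by blast
    then have "(\<Sum>i. ?m (A i)) = \<infinity>"
      using ennreal_suminf_lessD[of "\<lambda>i. ?m (A i)" \<infinity> j] by (fastforce simp: less_top[symmetric])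
    moreover have "\<tau> (\<Union>i. A i) \<noteq> 0"
    proof -
      have "\<tau> (A j) \<le> (SUP i. \<tau> (A i))" by (rule SUP_upper) simp
      then show ?thesis using sigma_maxitive that j unfolding sigma_maxitive_def by auto
    qed
    ultimately show ?thesis by simp
  qed
  then show ?thesis
    unfolding measure_space_def positive_def countably_additive_def
    using sigma_algebra_axioms tau_empty by auto
qed

lemma sigma_principal_iff_null_equivalent_measure:
  "sigma_principal B \<tau> \<longleftrightarrow>
     (\<exists>m. measure_space E B m \<and> sigma_principal B m \<and> (\<forall>A\<in>B. m A = 0 \<longleftrightarrow> \<tau> A = 0))"
proof
  let ?m = "\<lambda>A. if \<tau> A = 0 then 0 else \<infinity> :: ennreal"
  assume "sigma_principal B \<tau>"
  moreover have null_iff: "\<forall>A\<in>B. ?m A = 0 \<longleftrightarrow> \<tau> A = 0" by simp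
  ultimately have "sigma_principal B ?m" by (simp only: sigma_principal_cong_null_sets)
  then show "\<exists>m. measure_space E B m \<and> sigma_principal B m \<and> (\<forall>A\<in>B. m A = 0 \<longleftrightarrow> \<tau> A = 0)"
    using measure_space_null_sets_of_tau null_iff by blast
next
  assume "\<exists>m. measure_space E B m \<and> sigma_principal B m \<and> (\<forall>A\<in>B. m A = 0 \<longleftrightarrow> \<tau> A = 0)"
  then obtain m where "sigma_principal B m" and "\<forall>A\<in>B. m A = 0 \<longleftrightarrow> \<tau> A = 0" by blast
  then show "sigma_principal B \<tau>" by (simp only: sigma_principal_cong_null_sets)
qed

end

theorem mainTheorem5:
  fixes E :: "'a set" and B :: "'a set set" and \<tau> :: "'a set \<Rightarrow> ennreal"
  assumes "E \<noteq> {}"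
    and "sigma_algebra E B"
    and "sigma_maxitive B \<tau>"
  shows "(sigma_principal B \<tau> \<longleftrightarrow> countable_chain_condition B \<tau>)
       \<and> (countable_chain_condition B \<tau> \<longleftrightarrow> quotient_sigma_principal B \<tau>)
       \<and> (quotient_sigma_principal B \<tau> \<longleftrightarrow>
            (\<exists>m. measure_space E B m \<and> sigma_principal B m \<and>
                 (\<forall>A\<in>B. m A = 0 \<longleftrightarrow> \<tau> A = 0)))"
proof -
  interpret sigma_maxitive_space E B \<tau>
    using assms(2,3) by (rule sigma_maxitive_space.intro[OF _ sigma_maxitive_space_axioms.intro])
  have "sigma_principal B \<tau> \<longleftrightarrow> countable_chain_condition B \<tau>"
    using countable_chain_condition_if_sigma_principal
      sigma_principal_if_countable_chain_condition tau_empty by blast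
  moreover have "sigma_principal B \<tau> \<longleftrightarrow> quotient_sigma_principal B \<tau>"
    using quotient_sigma_principal_if_sigma_principal
      sigma_principal_if_quotient_sigma_principal by blast
  moreover note sigma_principal_iff_null_equivalent_measure
  ultimately show ?thesis by blast
qed

end
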